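(* Let $A$ be a rectangular region in the plane, and let $X$ be a set of $n \geq 2$ points placed independently and uniformly at random in $A$. Then the probability that $X$ is not nice for $A$ is at most $6/n$.
   Context: The edges of a rectangular region $A$ are the four line segments forming its boundary. For an edge $e$ of $A$, let $x_e = \arg\min_{x\in X} d(x,e)$ be the point of $X$ closest to $e$, where $d(x,e) = \min_{y \in e} d(x,y)$ and $d$ is Euclidean distance. The set $X$ is called nice for $A$ if for each pair of distinct edges $e, f$ of $A$ we have $x_e \neq x_f$. *)

theory Defs
  imports "HOL-Probability.Probability"
begin

definition rect :: "real \<times> real \<Rightarrow> real \<times> real \<Rightarrow> real \<times> real \<Rightarrow> (real \<times> real) set" where
  "rect c u v = {c + s *\<^sub>R u + t *\<^sub>R v | s t. s \<in> {0..1} \<and> t \<in> {0..1}}"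

definition rect_edges :: "real \<times> real \<Rightarrow> real \<times> real \<Rightarrow> real \<times> real \<Rightarrow> (real \<times> real) set set" where
  "rect_edges c u v =
     {closed_segment c (c + u), closed_segment (c + u) (c + u + v),
      closed_segment (c + u + v) (c + v), closed_segment (c + v) c}"

definition closest_to :: "(real \<times> real) set \<Rightarrow> (real \<times> real) set \<Rightarrow> real \<times> real \<Rightarrow> bool" where
  "closest_to X e x \<longleftrightarrow> x \<in> X \<and> (\<forall>y\<in>X. infdist x e \<le> infdist y e)"

text \<open>X is nice for the rectangle: the closest points to distinct edges differ.
  (If minimizers are not unique, every choice of minimizers must differ; ties
  occur with probability zero.)\<close>
definition nice :: "(real \<times> real) set \<Rightarrow> real \<times> real \<Rightarrow> real \<times> real \<Rightarrow> real \<times> real \<Rightarrow> bool" where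
  "nice X c u v \<longleftrightarrow>
     (\<forall>e\<in>rect_edges c u v. \<forall>f\<in>rect_edges c u v. e \<noteq> f \<longrightarrow>
        (\<forall>x y. closest_to X e x \<and> closest_to X f y \<longrightarrow> x \<noteq> y))"

end

theory Submission
  imports Defs
begin

text \<open>Write the points of the rectangle as c + s u + t v with (s, t) in the unit square. This affine
  map scales Lebesgue measure by a constant, so the uniform distribution on the rectangle is the image
  of the uniform distribution on the square, and the distance to each edge is a fixed multiple of one
  of s, 1 - s, t, 1 - t. The probability that X i is a closest point to two given edges is the
  integral over its position p of the (n - 1)-th power of the probability that a further point is
  at least as far from both edges as p. For adjacent edges that set is a box of area of the form
  s t (after reflections), and the integral is the square of the integral of s^(n-1), i.e. 1/n^2;
  for opposite edges it is a segment, of measure zero. A union bound over the 6 pairs of edges and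
  the n indices gives 6/n.\<close>

definition scales_lborel :: "(real \<times> real \<Rightarrow> real \<times> real) \<Rightarrow> real \<Rightarrow> bool" where
  "scales_lborel F K \<longleftrightarrow> K \<ge> 0 \<and> F \<in> borel_measurable borel \<and>
     (\<forall>A\<in>sets borel. emeasure lborel (F -` A) * ennreal K = emeasure lborel A)"

lemma scales_lborelD:
  assumes "scales_lborel F K" "A \<in> sets borel"
  shows "emeasure lborel (F -` A) * ennreal K = emeasure lborel A"
  using assms unfolding scales_lborel_def by blast

lemma scales_lborel_comp:
  assumes "scales_lborel F a" "scales_lborel G b"
  shows "scales_lborel (F \<circ> G) (a * b)"
proof -
  have "emeasure lborel ((F \<circ> G) -` A) * ennreal (a * b) = emeasure lborel A"
    if "A \<in> sets borel" for A
  proof -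
    have "F -` A \<in> sets borel"
      using assms(1) that by (auto simp: scales_lborel_def dest: measurable_sets)
    then have "emeasure lborel (G -` (F -` A)) * ennreal b * ennreal a = emeasure lborel A"
      using assms that by (simp add: scales_lborel_def)
    then show ?thesis
      using assms by (simp add: scales_lborel_def vimage_comp ennreal_mult mult_ac)
  qed
  then show ?thesis
    using assms by (auto simp: scales_lborel_def intro: measurable_comp)
qed

lemma scales_lborel_shear: "scales_lborel (\<lambda>(x, y). (x, y + k * x)) 1"
proof -
  let ?S = "\<lambda>(x::real, y::real). (x, y + k * x)"
  have meas: "?S \<in> borel_measurable borel"
    unfolding case_prod_beta' by (intro borel_measurable_continuous_onI continuous_intros)
  have "emeasure lborel (?S -` A) = emeasure lborel A" if A: "A \<in> sets borel" for A
  proof -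
    have A2: "A \<in> sets (lborel \<Otimes>\<^sub>M lborel)" and SA2: "?S -` A \<in> sets (lborel \<Otimes>\<^sub>M lborel)"
      using A measurable_sets[OF meas A] by (subst lborel_prod, simp)+
    have fibre: "emeasure lborel (Pair x -` (?S -` A)) = emeasure lborel (Pair x -` A)" for x
    proof -
      have "Pair x -` (?S -` A) = (+) (k * x) -` (Pair x -` A) \<inter> space lborel"
        by (auto simp: add.commute)
      moreover have "Pair x -` A \<in> sets borel"
        using sets_Pair1[OF A2] by simp
      ultimately have "emeasure lborel (Pair x -` (?S -` A)) = emeasure (distr lborel borel ((+) (k * x))) (Pair x -` A)"
        by (simp add: emeasure_distr)
      then show ?thesis
        by (simp add: lborel_distr_plus)
    qed
    have "emeasure lborel (?S -` A) = (\<integral>\<^sup>+x. emeasure lborel (Pair x -` (?S -` A)) \<partial>lborel)"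
      using lborel.emeasure_pair_measure_alt[OF SA2] by (simp add: lborel_prod)
    also have "\<dots> = (\<integral>\<^sup>+x. emeasure lborel (Pair x -` A) \<partial>lborel)"
      by (simp add: fibre)
    also have "\<dots> = emeasure lborel A"
      using lborel.emeasure_pair_measure_alt[OF A2] by (simp add: lborel_prod)
    finally show ?thesis .
  qed
  then show ?thesis
    using meas by (simp add: scales_lborel_def)
qed

lemma scales_lborel_swap: "scales_lborel prod.swap 1"
proof -
  let ?S = "prod.swap :: real \<times> real \<Rightarrow> real \<times> real"
  have meas: "?S \<in> borel_measurable borel"
    unfolding prod.swap_def by (intro borel_measurable_continuous_onI continuous_intros)
  have "pair_sigma_finite (lborel :: real measure) (lborel :: real measure)" ..
  from pair_sigma_finite.distr_pair_swap[OF this]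
  have "lborel = distr lborel borel ?S"
    by (metis lborel_prod distr_cong sets_lborel case_prod_beta' prod.swap_def)
  then have "emeasure lborel A = emeasure lborel (?S -` A)" if "A \<in> sets borel" for A
    using emeasure_distr[OF _ that, of ?S lborel] meas by simp
  then show ?thesis
    using meas by (simp add: scales_lborel_def)
qed

lemma scales_lborel_diagonal:
  assumes "a \<noteq> 0" "b \<noteq> 0"
  shows "scales_lborel (\<lambda>(x, y). (a * x + s, b * y + t)) (\<bar>a\<bar> * \<bar>b\<bar>)"
proof -
  let ?D = "\<lambda>(x::real, y::real). (a * x + s, b * y + t)"
  define d where "d j = (if j = ((1::real), (0::real)) then a else b)" for j :: "real \<times> real"
  have basis: "(Basis :: (real \<times> real) set) = {(1, 0), (0, 1)}"
    by (auto simp: Basis_prod_def)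
  have "(\<lambda>x. (s, t) + (\<Sum>j\<in>Basis. (d j * (x \<bullet> j)) *\<^sub>R j)) = ?D"
    by (auto simp: basis d_def fun_eq_iff)
  then have lborel_eq: "lborel = density (distr lborel borel ?D) (\<lambda>_. \<bar>a\<bar> * \<bar>b\<bar>)"
    using lborel_affine_euclidean[of d "(s, t)"] assms by (simp add: d_def basis)
  have meas: "?D \<in> borel_measurable borel"
    unfolding case_prod_beta' by (intro borel_measurable_continuous_onI continuous_intros)
  have "emeasure lborel A = ennreal (\<bar>a\<bar> * \<bar>b\<bar>) * emeasure lborel (?D -` A)"
    if "A \<in> sets borel" for A
    using that meas
    by (subst lborel_eq) (simp add: emeasure_density nn_integral_cmult_indicator emeasure_distr)
  then show ?thesis
    using meas by (simp add: scales_lborel_def mult.commute)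
qed

lemma scales_lborel_affine:
  fixes c u v :: "real \<times> real"
  assumes "fst u * snd v \<noteq> snd u * fst v"
  shows "scales_lborel (\<lambda>w. c + fst w *\<^sub>R u + snd w *\<^sub>R v) \<bar>fst u * snd v - snd u * fst v\<bar>"
proof -
  have shear_decomposition:
    "scales_lborel (\<lambda>w. c + fst w *\<^sub>R u + snd w *\<^sub>R v) \<bar>fst u * snd v - snd u * fst v\<bar>"
    if "fst u \<noteq> 0" "fst u * snd v \<noteq> snd u * fst v" for c u v :: "real \<times> real"
  proof -
    obtain a b p q c1 c2 where uvc: "u = (a, b)" "v = (p, q)" "c = (c1, c2)"
      by (metis prod.exhaust)
    define d where "d = a * q - b * p"
    have "a \<noteq> 0" "d / a \<noteq> 0"
      using that by (auto simp: uvc d_def)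
    \<comment> \<open>(x, y) \<mapsto> (a x + p y, b x + q y) is a horizontal shear (a vertical one conjugated by
      the swap), then a diagonal map with determinant d, then a vertical shear.\<close>
    let ?F = "(\<lambda>(x, y). (x, y + (b / a) * x))
      \<circ> (\<lambda>(x, y). (a * x + c1, (d / a) * y + (c2 - (b / a) * c1)))
      \<circ> prod.swap \<circ> (\<lambda>(x, y). (x, y + (p / a) * x)) \<circ> prod.swap"
    have "scales_lborel ?F (1 * (\<bar>a\<bar> * \<bar>d / a\<bar>) * 1 * 1 * 1)"
      by (intro scales_lborel_comp scales_lborel_swap scales_lborel_diagonal scales_lborel_shear
          \<open>a \<noteq> 0\<close> \<open>d / a \<noteq> 0\<close>)
    moreover have "?F = (\<lambda>w. c + fst w *\<^sub>R u + snd w *\<^sub>R v)"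
      using \<open>a \<noteq> 0\<close> by (auto simp: fun_eq_iff uvc d_def field_simps)
    ultimately show ?thesis
      using \<open>a \<noteq> 0\<close> by (simp add: uvc d_def abs_mult)
  qed
  show ?thesis
  proof (cases "fst u = 0")
    case True
    let ?G = "\<lambda>w. prod.swap c + fst w *\<^sub>R prod.swap u + snd w *\<^sub>R prod.swap v"
    have "scales_lborel ?G \<bar>snd u * fst v - fst u * snd v\<bar>"
      using shear_decomposition[of "prod.swap u" "prod.swap v" "prod.swap c"] True assms by auto
    then have "scales_lborel (prod.swap \<circ> ?G) (1 * \<bar>snd u * fst v - fst u * snd v\<bar>)"
      by (intro scales_lborel_comp scales_lborel_swap)
    moreover have "prod.swap \<circ> ?G = (\<lambda>w. c + fst w *\<^sub>R u + snd w *\<^sub>R v)"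
      by (auto simp: fun_eq_iff prod.swap_def prod_eq_iff)
    ultimately show ?thesis
      by (simp add: abs_minus_commute)
  qed (use assms shear_decomposition in auto)
qed

definition rect_param :: "real \<times> real \<Rightarrow> real \<times> real \<Rightarrow> real \<times> real \<Rightarrow> real \<times> real \<Rightarrow> real \<times> real" where
  "rect_param c u v w = c + fst w *\<^sub>R u + snd w *\<^sub>R v"

abbreviation unit_square :: "(real \<times> real) set" where
  "unit_square \<equiv> cbox (0, 0) (1, 1)"

lemma mem_unit_square: "(s, t) \<in> unit_square \<longleftrightarrow> s \<in> {0..1} \<and> t \<in> {0..1}"
  by (simp add: cbox_Pair_eq)

lemma emeasure_unit_square: "emeasure lborel unit_square = 1"
  by (simp add: emeasure_lborel_cbox_eq Basis_prod_def)

lemma continuous_on_rect_param: "continuous_on S (rect_param c u v)"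
  unfolding rect_param_def by (intro continuous_intros)

lemma rect_param_measurable [measurable]: "rect_param c u v \<in> borel_measurable borel"
  by (intro borel_measurable_continuous_onI continuous_on_rect_param)

lemma rect_eq_image: "rect c u v = rect_param c u v ` unit_square"
  unfolding rect_def rect_param_def by (auto simp: cbox_Pair_eq image_def; force)

lemma rect_sets [measurable]: "rect c u v \<in> sets borel"
proof -
  have "compact (rect c u v)"
    unfolding rect_eq_image by (intro compact_continuous_image continuous_on_rect_param compact_cbox)
  then show ?thesis
    by (intro borel_closed compact_imp_closed)
qed

lemma orthogonal_imp_det_nonzero:
  fixes u v :: "real \<times> real"
  assumes "u \<noteq> 0" "v \<noteq> 0" "inner u v = 0"
  shows "fst u * snd v \<noteq> snd u * fst v"
proof
  assume det: "fst u * snd v = snd u * fst v"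
  have "(fst u * fst u + snd u * snd u) * snd v = snd u * inner u v + fst u * (fst u * snd v - snd u * fst v)"
    by (simp add: inner_prod_def algebra_simps)
  moreover have "(fst u * fst u + snd u * snd u) * fst v = fst u * inner u v - snd u * (fst u * snd v - snd u * fst v)"
    by (simp add: inner_prod_def algebra_simps)
  moreover have "fst u * fst u + snd u * snd u \<noteq> 0"
    using assms(1) by (simp add: add_nonneg_eq_0_iff prod_eq_iff)
  ultimately show False
    using assms(2,3) det by (auto simp: prod_eq_iff)
qed

lemma inj_rect_param:
  assumes "fst u * snd v \<noteq> snd u * fst v"
  shows "inj (rect_param c u v)"
proof (rule injI)
  fix w w' assume "rect_param c u v w = rect_param c u v w'"
  then have "(fst w - fst w') * fst u + (snd w - snd w') * fst v = 0"
    "(fst w - fst w') * snd u + (snd w - snd w') * snd v = 0"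
    by (simp_all add: rect_param_def prod_eq_iff algebra_simps)
  then have "(fst w - fst w') * (fst u * snd v - snd u * fst v) = 0"
    "(snd w - snd w') * (fst u * snd v - snd u * fst v) = 0"
    by algebra+
  then show "w = w'"
    using assms by (simp add: prod_eq_iff)
qed

lemma vimage_rect_param_rect:
  assumes "fst u * snd v \<noteq> snd u * fst v"
  shows "rect_param c u v -` rect c u v = unit_square"
  unfolding rect_eq_image by (simp add: inj_vimage_image_eq inj_rect_param[OF assms])

lemma scales_lborel_rect_param:
  assumes "fst u * snd v \<noteq> snd u * fst v"
  shows "scales_lborel (rect_param c u v) \<bar>fst u * snd v - snd u * fst v\<bar>"
  using scales_lborel_affine[OF assms, of c] by (simp add: rect_param_def[abs_def])

lemma emeasure_rect:
  assumes "fst u * snd v \<noteq> snd u * fst v"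
  shows "emeasure lborel (rect c u v) = ennreal \<bar>fst u * snd v - snd u * fst v\<bar>"
proof -
  have "emeasure lborel (rect_param c u v -` rect c u v) * ennreal \<bar>fst u * snd v - snd u * fst v\<bar>
      = emeasure lborel (rect c u v)"
    using scales_lborelD[OF scales_lborel_rect_param[OF assms] rect_sets] .
  then show ?thesis
    by (simp add: vimage_rect_param_rect[OF assms] emeasure_unit_square)
qed

lemma prob_space_uniform_rect:
  assumes "fst u * snd v \<noteq> snd u * fst v"
  shows "prob_space (uniform_measure lborel (rect c u v))"
  using assms by (intro prob_space_uniform_measure) (simp_all add: emeasure_rect)

lemma emeasure_uniform_rect:
  assumes "fst u * snd v \<noteq> snd u * fst v" and A: "A \<in> sets borel"
  shows "emeasure (uniform_measure lborel (rect c u v)) A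
    = emeasure lborel (unit_square \<inter> rect_param c u v -` A)"
proof -
  let ?K = "\<bar>fst u * snd v - snd u * fst v\<bar>"
  have "unit_square \<inter> rect_param c u v -` A = rect_param c u v -` (rect c u v \<inter> A)"
    using vimage_rect_param_rect[OF assms(1)] by auto
  then have "emeasure lborel (unit_square \<inter> rect_param c u v -` A) * ennreal ?K
      = emeasure lborel (rect c u v \<inter> A)"
    using scales_lborelD[OF scales_lborel_rect_param[OF assms(1)], of "rect c u v \<inter> A" c] A
    by (metis rect_sets sets.Int)
  then have "emeasure lborel (rect c u v \<inter> A) / ennreal ?K
      = emeasure lborel (unit_square \<inter> rect_param c u v -` A)"
    using assms(1) by (metis ennreal_mult_divide_eq ennreal_eq_0_iff ennreal_neq_top abs_le_zero_iff
        eq_iff_diff_eq_0)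
  then show ?thesis
    using A by (simp add: emeasure_rect[OF assms(1)] Int_commute)
qed

lemma uniform_measure_rect_eq_distr:
  assumes "fst u * snd v \<noteq> snd u * fst v"
  shows "uniform_measure lborel (rect c u v)
    = distr (uniform_measure lborel unit_square) borel (rect_param c u v)"
proof (rule measure_eqI)
  fix A assume "A \<in> sets (uniform_measure lborel (rect c u v))"
  then have A: "A \<in> sets borel"
    by simp
  then have "emeasure (distr (uniform_measure lborel unit_square) borel (rect_param c u v)) A
      = emeasure lborel (rect_param c u v -` A \<inter> unit_square)"
    by (simp add: Int_commute emeasure_distr emeasure_unit_square divide_ennreal_def measurable_sets_borel[OF _ A])
  then show "emeasure (uniform_measure lborel (rect c u v)) A
      = emeasure (distr (uniform_measure lborel unit_square) borel (rect_param c u v)) A"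
    by (simp add: emeasure_uniform_rect[OF assms A] Int_commute)
qed simp

lemma nn_integral_uniform_rect:
  assumes "fst u * snd v \<noteq> snd u * fst v" and f: "f \<in> borel_measurable borel"
  shows "(\<integral>\<^sup>+x. f x \<partial>uniform_measure lborel (rect c u v))
    = (\<integral>\<^sup>+w. f (rect_param c u v w) * indicator unit_square w \<partial>lborel)"
  using f by (simp add: uniform_measure_rect_eq_distr[OF assms(1)] nn_integral_distr
      nn_integral_uniform_measure emeasure_unit_square divide_ennreal_def)

lemma infdist_closed_segment_orthogonal:
  fixes a w z :: "real \<times> real"
  assumes "inner w z = 0" "0 \<le> \<sigma>" "\<sigma> \<le> 1"
  shows "infdist (a + \<sigma> *\<^sub>R w + \<tau> *\<^sub>R z) (closed_segment a (a + w)) = \<bar>\<tau>\<bar> * norm z"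
proof (rule antisym)
  have "a + \<sigma> *\<^sub>R w \<in> closed_segment a (a + w)"
    using assms(2,3) unfolding closed_segment_def
    by (intro CollectI exI[of _ \<sigma>]) (simp add: algebra_simps)
  then show "infdist (a + \<sigma> *\<^sub>R w + \<tau> *\<^sub>R z) (closed_segment a (a + w)) \<le> \<bar>\<tau>\<bar> * norm z"
    by (rule infdist_le2) (simp add: dist_norm)
next
  have nonempty: "closed_segment a (a + w) \<noteq> {}"
    by simp
  show "\<bar>\<tau>\<bar> * norm z \<le> infdist (a + \<sigma> *\<^sub>R w + \<tau> *\<^sub>R z) (closed_segment a (a + w))"
    unfolding infdist_notempty[OF nonempty]
  proof (rule cINF_greatest[OF nonempty])
    fix y assume "y \<in> closed_segment a (a + w)"
    then obtain r where y: "y = (1 - r) *\<^sub>R a + r *\<^sub>R (a + w)"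
      unfolding closed_segment_def by blast
    have "a + \<sigma> *\<^sub>R w + \<tau> *\<^sub>R z - y = (\<sigma> - r) *\<^sub>R w + \<tau> *\<^sub>R z"
      by (simp add: y algebra_simps)
    moreover have "(norm ((\<sigma> - r) *\<^sub>R w + \<tau> *\<^sub>R z))\<^sup>2 = (norm ((\<sigma> - r) *\<^sub>R w))\<^sup>2 + (norm (\<tau> *\<^sub>R z))\<^sup>2"
      using assms(1) by (metis norm_add_Pythagorean orthogonal_def inner_scaleR_left inner_scaleR_right mult_zero_right)
    then have "(\<bar>\<tau>\<bar> * norm z)\<^sup>2 \<le> (norm ((\<sigma> - r) *\<^sub>R w + \<tau> *\<^sub>R z))\<^sup>2"
      by (simp add: power_mult_distrib)
    then have "\<bar>\<tau>\<bar> * norm z \<le> norm ((\<sigma> - r) *\<^sub>R w + \<tau> *\<^sub>R z)"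
      by (rule power2_le_imp_le) simp
    ultimately show "\<bar>\<tau>\<bar> * norm z \<le> dist (a + \<sigma> *\<^sub>R w + \<tau> *\<^sub>R z) y"
      by (simp only: dist_norm)
  qed
qed

definition rect_edge :: "real \<times> real \<Rightarrow> real \<times> real \<Rightarrow> real \<times> real \<Rightarrow> nat \<Rightarrow> (real \<times> real) set" where
  "rect_edge c u v k =
     (if k = 0 then closed_segment c (c + u)
      else if k = 1 then closed_segment (c + u) (c + u + v)
      else if k = 2 then closed_segment (c + u + v) (c + v)
      else closed_segment (c + v) c)"

definition edge_coord :: "nat \<Rightarrow> real \<times> real \<Rightarrow> real" where
  "edge_coord k w =
     (if k = 0 then snd w else if k = 1 then 1 - fst w else if k = 2 then 1 - snd w else fst w)"

lemma rect_edges_eq_image: "rect_edges c u v = rect_edge c u v ` {..<4}"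
  by (auto simp: rect_edges_def rect_edge_def lessThan_def numeral_eq_Suc less_Suc_eq image_def)

lemma infdist_rect_edge:
  assumes "inner u v = 0" "w \<in> unit_square" "k < 4"
  shows "infdist (rect_param c u v w) (rect_edge c u v k)
    = (if even k then norm v else norm u) * edge_coord k w"
proof -
  obtain s t where w: "w = (s, t)" and st: "s \<in> {0..1}" "t \<in> {0..1}"
    using assms(2) by (cases w) (simp add: mem_unit_square)
  have vu: "inner v u = 0"
    using assms(1) by (simp add: inner_commute)
  consider "k = 0" | "k = 1" | "k = 2" | "k = 3"
    using assms(3) by linarith
  then show ?thesis
  proof cases
    case 1
    have "rect_param c u v w = c + s *\<^sub>R u + t *\<^sub>R v"
      by (simp add: rect_param_def w)
    then show ?thesis
      using infdist_closed_segment_orthogonal[OF assms(1), of s c t] st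
      by (simp add: 1 rect_edge_def edge_coord_def w)
  next
    case 2
    have "rect_param c u v w = (c + u) + t *\<^sub>R v + (s - 1) *\<^sub>R u"
      by (simp add: rect_param_def w algebra_simps)
    then show ?thesis
      using infdist_closed_segment_orthogonal[OF vu, of t "c + u" "s - 1"] st
      by (simp add: 2 rect_edge_def edge_coord_def w add.assoc)
  next
    case 3
    have "rect_param c u v w = (c + u + v) + (1 - s) *\<^sub>R (- u) + (t - 1) *\<^sub>R v"
      by (simp add: rect_param_def w algebra_simps)
    then show ?thesis
      using infdist_closed_segment_orthogonal[of "- u" v "1 - s" "c + u + v" "t - 1"] assms(1) st
      by (simp add: 3 rect_edge_def edge_coord_def w)
  next
    case 4
    have "rect_param c u v w = (c + v) + (1 - t) *\<^sub>R (- v) + s *\<^sub>R u"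
      by (simp add: rect_param_def w algebra_simps)
    then show ?thesis
      using infdist_closed_segment_orthogonal[of "- v" u "1 - t" "c + v" s] vu st
      by (simp add: 4 rect_edge_def edge_coord_def w)
  qed
qed

lemma emeasure_PiM_component_related_to_all:
  fixes \<mu> :: "'a measure" and J :: "'i set"
  assumes "prob_space \<mu>" "finite J" "i \<notin> J"
    and P_sets: "{z \<in> space (\<mu> \<Otimes>\<^sub>M \<mu>). P (fst z) (snd z)} \<in> sets (\<mu> \<Otimes>\<^sub>M \<mu>)"
    and P_refl: "\<And>p. P p p"
  shows "emeasure (PiM (insert i J) (\<lambda>_. \<mu>))
      {x \<in> space (PiM (insert i J) (\<lambda>_. \<mu>)). \<forall>j\<in>insert i J. P (x i) (x j)}
    = (\<integral>\<^sup>+p. emeasure \<mu> {q \<in> space \<mu>. P p q} ^ card J \<partial>\<mu>)"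
    (is "emeasure ?M ?B = _")
proof -
  interpret prob_space \<mu> by (rule assms(1))
  interpret product_prob_space "\<lambda>_ :: 'i. \<mu>" ..
  have P_pred: "Measurable.pred (\<mu> \<Otimes>\<^sub>M \<mu>) (\<lambda>z. P (fst z) (snd z))"
    using P_sets by (simp add: pred_def)
  have "Measurable.pred ?M (\<lambda>x. P (x i) (x j))" if "j \<in> insert i J" for j
    using measurable_compose[OF _ P_pred, of "\<lambda>x. (x i, x j)"] that by simp
  then have B_sets: "?B \<in> sets ?M"
    using assms(2) by (simp add: pred_def[symmetric] pred_intros_finite)
  have fibre: "(\<integral>\<^sup>+x. indicator ?B (x(i := p)) \<partial>PiM J (\<lambda>_. \<mu>)) = emeasure \<mu> {q \<in> space \<mu>. P p q} ^ card J"
    if p: "p \<in> space \<mu>" for p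
  proof -
    let ?D = "{q \<in> space \<mu>. P p q}"
    have D_sets: "?D \<in> sets \<mu>"
      using sets_Pair1[OF P_sets, of p] p by (simp add: space_pair_measure vimage_def)
    have "x(i := p) \<in> ?B \<longleftrightarrow> x \<in> PiE J (\<lambda>_. ?D)" if x: "x \<in> space (PiM J (\<lambda>_. \<mu>))" for x
    proof -
      have "x(i := p) \<in> space ?M" and "x \<in> PiE J (\<lambda>_. space \<mu>)"
        using x p by (auto simp: space_PiM PiE_def extensional_def)
      moreover have "(x(i := p)) j = x j" if "j \<in> J" for j
        using that assms(3) by auto
      ultimately show ?thesis
        using P_refl by (auto simp: PiE_iff)
    qed
    then have "indicator ?B (x(i := p)) = indicator (PiE J (\<lambda>_. ?D)) x" if "x \<in> space (PiM J (\<lambda>_. \<mu>))" for x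
      using that by (simp add: indicator_def)
    then have "(\<integral>\<^sup>+x. indicator ?B (x(i := p)) \<partial>PiM J (\<lambda>_. \<mu>))
        = (\<integral>\<^sup>+x. indicator (PiE J (\<lambda>_. ?D)) x \<partial>PiM J (\<lambda>_. \<mu>))"
      by (rule nn_integral_cong)
    also have "\<dots> = emeasure (PiM J (\<lambda>_. \<mu>)) (PiE J (\<lambda>_. ?D))"
      using D_sets assms(2) by (simp add: sets_PiM_I_finite)
    also have "\<dots> = emeasure \<mu> ?D ^ card J"
      using D_sets assms(2) by (simp add: emeasure_PiM)
    finally show ?thesis .
  qed
  have "emeasure ?M ?B = (\<integral>\<^sup>+p. \<integral>\<^sup>+x. indicator ?B (x(i := p)) \<partial>PiM J (\<lambda>_. \<mu>) \<partial>\<mu>)"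
    using B_sets assms(2,3) by (simp add: product_nn_integral_insert_rev[symmetric])
  also have "\<dots> = (\<integral>\<^sup>+p. emeasure \<mu> {q \<in> space \<mu>. P p q} ^ card J \<partial>\<mu>)"
    by (rule nn_integral_cong) (rule fibre)
  finally show ?thesis .
qed

lemma nn_integral_power_unit_interval:
  "(\<integral>\<^sup>+x. ennreal x ^ m * indicator {0..1} x \<partial>lborel) = ennreal (1 / real (m + 1))"
proof -
  have "DERIV (\<lambda>x. x ^ Suc m / Suc m) x :> x ^ m" for x :: real
    using DERIV_cdivide[OF DERIV_pow[of "Suc m" x], of "Suc m"] by simp
  then have "(\<integral>\<^sup>+x. ennreal (x ^ m) * indicator {0..1} x \<partial>lborel)
      = (\<lambda>x. x ^ Suc m / Suc m) 1 - (\<lambda>x. x ^ Suc m / Suc m) (0 :: real)"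
    by (intro nn_integral_FTC_Icc) auto
  moreover have "ennreal (x ^ m) * indicator {0..1} x = ennreal x ^ m * indicator {0..1} x" for x :: real
    by (simp add: indicator_def ennreal_power)
  ultimately show ?thesis
    by simp
qed

lemma nn_integral_reflected_power_unit_interval:
  "(\<integral>\<^sup>+x. ennreal (1 - x) ^ m * indicator {0..1} x \<partial>lborel) = ennreal (1 / real (m + 1))"
proof -
  have "indicator {0..1} (1 - x) = (indicator {0..1} x :: ennreal)" for x :: real
    by (auto simp: indicator_def)
  then show ?thesis
    using nn_integral_real_affine[of "\<lambda>x. ennreal x ^ m * indicator {0..1} x" "-1" 1]
    by (simp add: nn_integral_power_unit_interval)
qed

lemma nn_integral_unit_square_product:
  fixes f g :: "real \<Rightarrow> ennreal"
  assumes [measurable]: "f \<in> borel_measurable borel" "g \<in> borel_measurable borel"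
  shows "(\<integral>\<^sup>+w. f (fst w) * g (snd w) * indicator unit_square w \<partial>lborel)
    = (\<integral>\<^sup>+x. f x * indicator {0..1} x \<partial>lborel) * (\<integral>\<^sup>+y. g y * indicator {0..1} y \<partial>lborel)"
proof -
  have split: "f x * g y * indicator unit_square (x, y)
      = (f x * indicator {0..1} x) * (g y * indicator {0..1} y)" for x y
    by (simp add: mem_unit_square indicator_def)
  have "(\<integral>\<^sup>+w. f (fst w) * g (snd w) * indicator unit_square w \<partial>lborel)
      = (\<integral>\<^sup>+x. \<integral>\<^sup>+y. f x * g y * indicator unit_square (x, y) \<partial>lborel \<partial>lborel)"
  proof -
    have "unit_square \<in> sets (lborel \<Otimes>\<^sub>M lborel)"
      by (subst lborel_prod) simp
    then show ?thesis
      by (subst lborel_prod[symmetric], subst lborel.nn_integral_fst[symmetric]) simp_all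
  qed
  also have "\<dots> = (\<integral>\<^sup>+x. (f x * indicator {0..1} x) * (\<integral>\<^sup>+y. g y * indicator {0..1} y \<partial>lborel) \<partial>lborel)"
    by (simp add: split nn_integral_cmult)
  also have "\<dots> = (\<integral>\<^sup>+x. f x * indicator {0..1} x \<partial>lborel) * (\<integral>\<^sup>+y. g y * indicator {0..1} y \<partial>lborel)"
    by (simp add: nn_integral_multc)
  finally show ?thesis .
qed

definition farther_region :: "nat \<Rightarrow> nat \<Rightarrow> real \<times> real \<Rightarrow> (real \<times> real) set" where
  "farther_region k l w =
     {w' \<in> unit_square. edge_coord k w \<le> edge_coord k w' \<and> edge_coord l w \<le> edge_coord l w'}"

definition edge_pairs :: "(nat \<times> nat) set" where
  "edge_pairs = {(k, l). k < l \<and> l < 4}"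

lemma farther_region_eq_cbox:
  assumes "s \<in> {0..1}" "t \<in> {0..1}"
  shows "farther_region 0 1 (s, t) = cbox (0, t) (s, 1)"
    and "farther_region 0 2 (s, t) = cbox (0, t) (1, t)"
    and "farther_region 0 3 (s, t) = cbox (s, t) (1, 1)"
    and "farther_region 1 2 (s, t) = cbox (0, 0) (s, t)"
    and "farther_region 1 3 (s, t) = cbox (s, 0) (s, 1)"
    and "farther_region 2 3 (s, t) = cbox (s, 0) (1, t)"
  using assms by (auto simp: farther_region_def edge_coord_def cbox_Pair_eq)

lemma emeasure_cbox_pair:
  assumes "a \<le> c" "b \<le> d"
  shows "emeasure lborel (cbox (a, b) (c, d)) = ennreal (c - a) * ennreal (d - b)"
  using assms by (simp add: emeasure_lborel_cbox_eq Basis_prod_def ennreal_mult mult.commute)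

lemma nn_integral_corner_box_power:
  assumes "F \<in> {\<lambda>x. x, \<lambda>x. 1 - x}" "G \<in> {\<lambda>x. x, \<lambda>x. 1 - x}"
    and "\<And>s t. (s, t) \<in> unit_square \<Longrightarrow> emeasure lborel (R (s, t)) = ennreal (F s) * ennreal (G t)"
  shows "(\<integral>\<^sup>+w. emeasure lborel (R w) ^ m * indicator unit_square w \<partial>lborel)
    = ennreal (1 / real (m + 1)) * ennreal (1 / real (m + 1))"
proof -
  have "(\<integral>\<^sup>+w. emeasure lborel (R w) ^ m * indicator unit_square w \<partial>lborel)
      = (\<integral>\<^sup>+w. ennreal (F (fst w)) ^ m * ennreal (G (snd w)) ^ m * indicator unit_square w \<partial>lborel)"
    using assms(3) by (intro nn_integral_cong) (auto simp: indicator_def power_mult_distrib)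
  also have "\<dots> = ennreal (1 / real (m + 1)) * ennreal (1 / real (m + 1))"
    using assms(1,2)
    by (subst nn_integral_unit_square_product)
      (auto simp: nn_integral_power_unit_interval nn_integral_reflected_power_unit_interval)
  finally show ?thesis .
qed

lemma nn_integral_null_box_power:
  assumes "m \<ge> 1" "\<And>w. w \<in> unit_square \<Longrightarrow> emeasure lborel (R w) = 0"
  shows "(\<integral>\<^sup>+w. emeasure lborel (R w) ^ m * indicator unit_square w \<partial>lborel) = 0"
proof -
  have "(\<integral>\<^sup>+w. emeasure lborel (R w) ^ m * indicator unit_square w \<partial>lborel)
      = (\<integral>\<^sup>+w. 0 \<partial>(lborel :: (real \<times> real) measure))"
    using assms by (intro nn_integral_cong) (auto simp: indicator_def)
  then show ?thesis
    by simp
qed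

lemma nn_integral_farther_region_power_le:
  assumes "(k, l) \<in> edge_pairs" "m \<ge> 1"
  shows "(\<integral>\<^sup>+w. emeasure lborel (farther_region k l w) ^ m * indicator unit_square w \<partial>lborel)
    \<le> ennreal (1 / real (m + 1)) * ennreal (1 / real (m + 1))"
proof -
  have "(k, l) \<in> {(0, 1), (0, 2), (0, 3), (1, 2), (1, 3), (2, 3)}"
    using assms(1) by (auto simp: edge_pairs_def numeral_eq_Suc less_Suc_eq)
  then consider "(k, l) = (0, 1)" | "(k, l) = (0, 3)" | "(k, l) = (1, 2)" | "(k, l) = (2, 3)"
    | "(k, l) = (0, 2)" | "(k, l) = (1, 3)"
    by blast
  then show ?thesis
  proof cases
    case 1
    then show ?thesis
      by (intro eq_refl nn_integral_corner_box_power[where F = "\<lambda>x. x" and G = "\<lambda>x. 1 - x"])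
        (auto simp del: One_nat_def simp: farther_region_eq_cbox emeasure_cbox_pair mem_unit_square)
  next
    case 2
    then show ?thesis
      by (intro eq_refl nn_integral_corner_box_power[where F = "\<lambda>x. 1 - x" and G = "\<lambda>x. 1 - x"])
        (auto simp del: One_nat_def simp: farther_region_eq_cbox emeasure_cbox_pair mem_unit_square)
  next
    case 3
    then show ?thesis
      by (intro eq_refl nn_integral_corner_box_power[where F = "\<lambda>x. x" and G = "\<lambda>x. x"])
        (auto simp del: One_nat_def simp: farther_region_eq_cbox emeasure_cbox_pair mem_unit_square)
  next
    case 4
    then show ?thesis
      by (intro eq_refl nn_integral_corner_box_power[where F = "\<lambda>x. 1 - x" and G = "\<lambda>x. x"])
        (auto simp del: One_nat_def simp: farther_region_eq_cbox emeasure_cbox_pair mem_unit_square)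
  next
    case 5
    then show ?thesis
      using assms(2) by (subst nn_integral_null_box_power)
        (auto simp del: One_nat_def simp: farther_region_eq_cbox emeasure_cbox_pair mem_unit_square)
  next
    case 6
    then show ?thesis
      using assms(2) by (subst nn_integral_null_box_power)
        (auto simp del: One_nat_def simp: farther_region_eq_cbox emeasure_cbox_pair mem_unit_square)
  qed
qed

lemma borel_measurable_infdist [measurable]: "(\<lambda>p. infdist p A) \<in> borel_measurable borel"
  by (intro borel_measurable_continuous_onI continuous_intros)

definition nearer_both :: "(real \<times> real) set \<Rightarrow> (real \<times> real) set \<Rightarrow> real \<times> real \<Rightarrow> real \<times> real \<Rightarrow> bool" where
  "nearer_both e f p q \<longleftrightarrow> infdist p e \<le> infdist q e \<and> infdist p f \<le> infdist q f"

lemma emeasure_uniform_rect_nearer_both: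
  assumes "u \<noteq> 0" "v \<noteq> 0" "inner u v = 0" "k < 4" "l < 4" "w \<in> unit_square"
  shows "emeasure (uniform_measure lborel (rect c u v))
      {q. nearer_both (rect_edge c u v k) (rect_edge c u v l) (rect_param c u v w) q}
    = emeasure lborel (farther_region k l w)"
proof -
  have det: "fst u * snd v \<noteq> snd u * fst v"
    using orthogonal_imp_det_nonzero assms(1-3) .
  have "nearer_both (rect_edge c u v k) (rect_edge c u v l) (rect_param c u v w) (rect_param c u v w')
      \<longleftrightarrow> edge_coord k w \<le> edge_coord k w' \<and> edge_coord l w \<le> edge_coord l w'"
    if "w' \<in> unit_square" for w'
    using assms(1,2) by (simp add: nearer_both_def infdist_rect_edge[OF assms(3)] assms(4-6) that)
  then have "unit_square \<inter> rect_param c u v -` {q. nearer_both (rect_edge c u v k) (rect_edge c u v l) (rect_param c u v w) q}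
      = farther_region k l w"
    by (auto simp: farther_region_def)
  moreover have "{q. nearer_both (rect_edge c u v k) (rect_edge c u v l) (rect_param c u v w) q} \<in> sets borel"
    unfolding nearer_both_def by measurable
  ultimately show ?thesis
    using emeasure_uniform_rect[OF det] by metis
qed

lemma sets_pair_nearer_both:
  assumes "sets \<mu> = sets borel"
  shows "{z \<in> space (\<mu> \<Otimes>\<^sub>M \<mu>). nearer_both e f (fst z) (snd z)} \<in> sets (\<mu> \<Otimes>\<^sub>M \<mu>)"
proof -
  have "sets (\<mu> \<Otimes>\<^sub>M \<mu>) = sets (borel :: ((real \<times> real) \<times> (real \<times> real)) measure)"
    using sets_pair_measure_cong[OF assms assms] by (metis borel_prod)
  moreover have "{z \<in> space (\<mu> \<Otimes>\<^sub>M \<mu>). nearer_both e f (fst z) (snd z)}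
      = {z. nearer_both e f (fst z) (snd z)}"
    using sets_eq_imp_space_eq[OF assms] by (simp add: space_pair_measure)
  moreover have "{z. nearer_both e f (fst z) (snd z)} \<in> sets borel"
    unfolding nearer_both_def
    by (intro borel_closed closed_Collect_conj closed_Collect_le continuous_intros)
  ultimately show ?thesis
    by simp
qed

lemma measurable_emeasure_nearer_both:
  assumes "sigma_finite_measure \<mu>" "sets \<mu> = sets borel"
  shows "(\<lambda>p. emeasure \<mu> {q. nearer_both e f p q}) \<in> borel_measurable borel"
proof -
  interpret \<mu>: sigma_finite_measure \<mu>
    by (rule assms(1))
  have "(\<lambda>p. emeasure \<mu> (Pair p -` {z \<in> space (\<mu> \<Otimes>\<^sub>M \<mu>). nearer_both e f (fst z) (snd z)}))
      \<in> borel_measurable \<mu>"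
    using sets_pair_nearer_both[OF assms(2)] by (rule \<mu>.measurable_emeasure_Pair)
  then show ?thesis
    using sets_eq_imp_space_eq[OF assms(2)]
    by (simp add: space_pair_measure vimage_def measurable_cong_sets[OF assms(2) refl])
qed

lemma emeasure_nearest_to_both_eq:
  fixes c u v :: "real \<times> real" and n :: nat
  assumes "u \<noteq> 0" "v \<noteq> 0" "inner u v = 0" "k < 4" "l < 4" "i < n"
  defines "M \<equiv> PiM {..<n} (\<lambda>_. uniform_measure lborel (rect c u v))"
  shows "emeasure M {x \<in> space M. \<forall>j<n. nearer_both (rect_edge c u v k) (rect_edge c u v l) (x i) (x j)}
    = (\<integral>\<^sup>+w. emeasure lborel (farther_region k l w) ^ (n - 1) * indicator unit_square w \<partial>lborel)"
proof -
  define \<mu> where "\<mu> = uniform_measure lborel (rect c u v)"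
  let ?P = "nearer_both (rect_edge c u v k) (rect_edge c u v l)"
  define J where "J = {..<n} - {i}"
  have det: "fst u * snd v \<noteq> snd u * fst v"
    using orthogonal_imp_det_nonzero assms(1-3) .
  have J: "{..<n} = insert i J" "i \<notin> J" "finite J" "card J = n - 1"
    using assms(6) by (auto simp: J_def)
  have sets_\<mu>: "sets \<mu> = sets borel" and space_\<mu>: "space \<mu> = UNIV"
    by (simp_all add: \<mu>_def)
  interpret \<mu>: prob_space \<mu>
    unfolding \<mu>_def using det by (rule prob_space_uniform_rect)
  have "emeasure M {x \<in> space M. \<forall>j<n. ?P (x i) (x j)}
      = emeasure (PiM (insert i J) (\<lambda>_. \<mu>)) {x \<in> space (PiM (insert i J) (\<lambda>_. \<mu>)). \<forall>j\<in>insert i J. ?P (x i) (x j)}"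
    unfolding M_def \<mu>_def[symmetric] J(1)[symmetric] by (simp add: Ball_def)
  also have "\<dots> = (\<integral>\<^sup>+p. emeasure \<mu> {q. ?P p q} ^ (n - 1) \<partial>\<mu>)"
    using emeasure_PiM_component_related_to_all[OF \<mu>.prob_space_axioms J(3,2) sets_pair_nearer_both[OF sets_\<mu>]]
    by (simp add: nearer_both_def space_\<mu> J(4))
  also have "\<dots> = (\<integral>\<^sup>+w. emeasure \<mu> {q. ?P (rect_param c u v w) q} ^ (n - 1) * indicator unit_square w \<partial>lborel)"
    using measurable_emeasure_nearer_both[OF \<mu>.sigma_finite_measure_axioms sets_\<mu>]
    unfolding \<mu>_def by (simp add: nn_integral_uniform_rect[OF det])
  also have "\<dots> = (\<integral>\<^sup>+w. emeasure lborel (farther_region k l w) ^ (n - 1) * indicator unit_square w \<partial>lborel)"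
    using emeasure_uniform_rect_nearer_both[OF assms(1-5)]
    by (intro nn_integral_cong) (simp add: \<mu>_def indicator_def)
  finally show ?thesis .
qed

lemma measure_nearest_to_both_le:
  fixes c u v :: "real \<times> real" and n :: nat
  assumes "u \<noteq> 0" "v \<noteq> 0" "inner u v = 0" "(k, l) \<in> edge_pairs" "n \<ge> 2" "i < n"
  defines "M \<equiv> PiM {..<n} (\<lambda>_. uniform_measure lborel (rect c u v))"
  shows "measure M {x \<in> space M. \<forall>j<n. nearer_both (rect_edge c u v k) (rect_edge c u v l) (x i) (x j)}
    \<le> 1 / n\<^sup>2"
proof -
  interpret M: prob_space M
    unfolding M_def using orthogonal_imp_det_nonzero[OF assms(1-3)]
    by (intro prob_space_PiM prob_space_uniform_rect)
  have "k < 4" "l < 4" "Suc (n - 1) = n" "n - 1 \<ge> 1"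
    using assms(4,5) by (auto simp: edge_pairs_def)
  then have "emeasure M {x \<in> space M. \<forall>j<n. nearer_both (rect_edge c u v k) (rect_edge c u v l) (x i) (x j)}
      \<le> ennreal (1 / n) * ennreal (1 / n)"
    using nn_integral_farther_region_power_le[OF assms(4), of "n - 1"]
    unfolding M_def by (simp add: emeasure_nearest_to_both_eq[OF assms(1-3) _ _ assms(6)])
  then show ?thesis
    by (simp add: M.emeasure_eq_measure ennreal_mult[symmetric] power2_eq_square)
qed

lemma card_edge_pairs: "card edge_pairs = 6"
proof -
  have pairs: "edge_pairs = {(0, 1), (0, 2), (0, 3), (1, 2), (1, 3), (2, 3)}"
    by (auto simp: edge_pairs_def numeral_eq_Suc less_Suc_eq)
  show ?thesis
    unfolding pairs by simp
qed

lemma finite_edge_pairs: "finite edge_pairs"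
  using card_edge_pairs by (intro card_ge_0_finite) simp

lemma not_nice_iff:
  "\<not> nice (x ` {..<n}) c u v \<longleftrightarrow>
    (\<exists>e\<in>rect_edges c u v. \<exists>f\<in>rect_edges c u v. e \<noteq> f \<and> (\<exists>i<n. \<forall>j<n. nearer_both e f (x i) (x j)))"
  unfolding nice_def closest_to_def nearer_both_def by blast

lemma sets_nearest_to_both:
  fixes n :: nat
  assumes "sets \<mu> = sets borel" "i < n"
  shows "{x \<in> space (PiM {..<n} (\<lambda>_. \<mu>)). \<forall>j<n. nearer_both e f (x i) (x j)} \<in> sets (PiM {..<n} (\<lambda>_. \<mu>))"
proof -
  have sets_eq: "sets (PiM {..<n} (\<lambda>_. \<mu>)) = sets (PiM {..<n} (\<lambda>_. borel))"
    using assms(1) by (intro sets_PiM_cong) simp_all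
  have "{x \<in> space (PiM {..<n} (\<lambda>_. \<mu>)). \<forall>j<n. nearer_both e f (x i) (x j)}
      = {x \<in> space (PiM {..<n} (\<lambda>_. borel)). \<forall>j\<in>{..<n}. nearer_both e f (x i) (x j)}"
    using sets_eq_imp_space_eq[OF sets_eq] by auto
  also have "\<dots> \<in> sets (PiM {..<n} (\<lambda>_. borel))"
  proof (rule predE, rule pred_intros_finite)
    fix j assume "j \<in> {..<n}"
    then have "(\<lambda>x. infdist (x m) g) \<in> borel_measurable (PiM {..<n} (\<lambda>_. borel))"
      if "m \<in> {i, j}" for m g
      using that assms(2) by (auto intro: measurable_compose[OF measurable_component_singleton])
    then have "Measurable.pred (PiM {..<n} (\<lambda>_. borel)) (\<lambda>x. infdist (x i) g \<le> infdist (x j) g)" for g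
      unfolding pred_def by (intro borel_measurable_le) auto
    then show "Measurable.pred (PiM {..<n} (\<lambda>_. borel)) (\<lambda>x. nearer_both e f (x i) (x j))"
      unfolding nearer_both_def by (intro pred_intros_logic)
  qed simp
  finally show ?thesis
    unfolding sets_eq .
qed

lemma nearer_both_commute: "nearer_both e f = nearer_both f e"
  by (auto simp: nearer_both_def fun_eq_iff)

lemma sets_not_nice:
  fixes n :: nat
  assumes "sets \<mu> = sets borel"
  shows "{x \<in> space (PiM {..<n} (\<lambda>_. \<mu>)). \<not> nice (x ` {..<n}) c u v} \<in> sets (PiM {..<n} (\<lambda>_. \<mu>))"
proof -
  have "{x \<in> space (PiM {..<n} (\<lambda>_. \<mu>)). \<not> nice (x ` {..<n}) c u v}
      = (\<Union>e\<in>rect_edges c u v. \<Union>f\<in>rect_edges c u v - {e}. \<Union>i<n.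
          {x \<in> space (PiM {..<n} (\<lambda>_. \<mu>)). \<forall>j<n. nearer_both e f (x i) (x j)})"
    unfolding not_nice_iff by blast
  then show ?thesis
    using assms by (auto intro!: sets.finite_UN sets_nearest_to_both simp: rect_edges_def)
qed

lemma not_nice_subset_edge_pairs:
  "{x \<in> S. \<not> nice (x ` {..<n}) c u v} \<subseteq> (\<Union>((k, l), i)\<in>edge_pairs \<times> {..<n}.
     {x \<in> S. \<forall>j<n. nearer_both (rect_edge c u v k) (rect_edge c u v l) (x i) (x j)})"
proof
  fix x assume x: "x \<in> {x \<in> S. \<not> nice (x ` {..<n}) c u v}"
  then obtain e f i where ef: "e \<in> rect_edges c u v" "f \<in> rect_edges c u v" "e \<noteq> f"
    and i: "i < n" "\<forall>j<n. nearer_both e f (x i) (x j)"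
    unfolding not_nice_iff by blast
  obtain k l where kl: "k < 4" "l < 4" "e = rect_edge c u v k" "f = rect_edge c u v l"
    using ef(1,2) unfolding rect_edges_eq_image by blast
  have near: "\<forall>j<n. nearer_both (rect_edge c u v k) (rect_edge c u v l) (x i) (x j)"
    "\<forall>j<n. nearer_both (rect_edge c u v l) (rect_edge c u v k) (x i) (x j)"
    using i(2) kl(3,4) nearer_both_commute by simp_all
  have "k \<noteq> l"
    using ef(3) kl(3,4) by blast
  then have "(k, l) \<in> edge_pairs \<or> (l, k) \<in> edge_pairs"
    using kl(1,2) by (auto simp: edge_pairs_def)
  then show "x \<in> (\<Union>((k, l), i)\<in>edge_pairs \<times> {..<n}.
      {x \<in> S. \<forall>j<n. nearer_both (rect_edge c u v k) (rect_edge c u v l) (x i) (x j)})"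
  proof (elim disjE)
    assume "(k, l) \<in> edge_pairs"
    then show ?thesis
      using x i(1) near(1) by (intro UN_I[of "((k, l), i)"]) auto
  next
    assume "(l, k) \<in> edge_pairs"
    then show ?thesis
      using x i(1) near(2) by (intro UN_I[of "((l, k), i)"]) auto
  qed
qed

theorem lemma4:
  fixes c u v :: "real \<times> real" and n :: nat
  assumes "u \<noteq> 0" and "v \<noteq> 0" and "inner u v = 0" and "n \<ge> 2"
  defines "M \<equiv> PiM {..<n} (\<lambda>_. uniform_measure lborel (rect c u v))"
  shows "{x \<in> space M. \<not> nice (x ` {..<n}) c u v} \<in> sets M \<and>
         measure M {x \<in> space M. \<not> nice (x ` {..<n}) c u v} \<le> 6 / real n"
proof -
  define A where "A = (\<lambda>((k, l), i).
    {x \<in> space M. \<forall>j<n. nearer_both (rect_edge c u v k) (rect_edge c u v l) (x i) (x j)})"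
  interpret M: prob_space M
    unfolding M_def using orthogonal_imp_det_nonzero[OF assms(1-3)]
    by (intro prob_space_PiM prob_space_uniform_rect)
  have A_sets: "A p \<in> sets M" and A_prob: "measure M (A p) \<le> 1 / n\<^sup>2"
    if p_mem: "p \<in> edge_pairs \<times> {..<n}" for p
  proof -
    obtain k l i where p: "p = ((k, l), i)" "(k, l) \<in> edge_pairs" "i < n"
      using p_mem by (cases p) auto
    show "A p \<in> sets M"
      unfolding A_def M_def p(1) using p(3) by (simp add: sets_nearest_to_both)
    show "measure M (A p) \<le> 1 / n\<^sup>2"
      using measure_nearest_to_both_le[OF assms(1-3) p(2) assms(4) p(3)]
      unfolding A_def M_def p(1) by simp
  qed
  have "{x \<in> space M. \<not> nice (x ` {..<n}) c u v} \<subseteq> (\<Union>p\<in>edge_pairs \<times> {..<n}. A p)"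
    unfolding A_def by (rule not_nice_subset_edge_pairs)
  then have "measure M {x \<in> space M. \<not> nice (x ` {..<n}) c u v} \<le> measure M (\<Union>p\<in>edge_pairs \<times> {..<n}. A p)"
    using A_sets finite_edge_pairs by (intro M.finite_measure_mono sets.finite_UN) auto
  also have "\<dots> \<le> (\<Sum>p\<in>edge_pairs \<times> {..<n}. measure M (A p))"
    using A_sets finite_edge_pairs by (intro M.finite_measure_subadditive_finite) auto
  also have "\<dots> \<le> real (card (edge_pairs \<times> {..<n})) * (1 / n\<^sup>2)"
    using A_prob by (rule sum_bounded_above)
  also have "\<dots> = 6 / n"
    using assms(4) by (simp add: card_cartesian_product card_edge_pairs power2_eq_square)
  finally show ?thesis
    unfolding M_def by (simp add: sets_not_nice)
qed

end
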